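(* Let $\alpha'>0$, $\nu':=\nu(\alpha')$, $T:=T(\alpha')$, let $\delta\in(0,1)$ and $0<\Delta\le(1-\delta)/\nu'$. Then for all integers $t,m$ and reals $x$ with $T\le x\le m<t$: $$e^{\nu'm}+\tfrac{t-m}{\alpha'}e^{\nu'(m-T)}\le e^{\nu't},$$ $$e^{\nu'm}-e^{\nu'(x-\Delta)}+\delta\,\tfrac{t-m}{\alpha'}e^{\nu'x}\le e^{\nu't}.$$
   Context: For $\alpha>0$, let $T=T(\alpha)\in\mathbb N$ be the unique positive integer with $\frac{(T-1)^T}{T^{T-1}}<\alpha\le\frac{T^{T+1}}{(T+1)^T}$, and define $\nu(\alpha):=\frac1T\log\frac T\alpha$. (In the paper this is applied with $\alpha'=\alpha/(1+3\epsilon)$, $\delta=(1+2\epsilon)/(1+3\epsilon)$, $\Delta\le\epsilon/(\nu'(1+3\epsilon))$.) *)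

theory Defs
  imports Complex_Main
begin

definition T_of :: "real \<Rightarrow> nat" where
  "T_of \<alpha> = (THE T::nat. 1 \<le> T \<and>
       (real T - 1) ^ T / real T ^ (T - 1) < \<alpha> \<and>
       \<alpha> \<le> real T ^ (T + 1) / (real T + 1) ^ T)"

definition nu :: "real \<Rightarrow> real" where
  "nu \<alpha> = (1 / real (T_of \<alpha>)) * ln (real (T_of \<alpha>) / \<alpha>)"

end

theory Submission
  imports Defs
begin

text \<open>Write \<open>\<nu> = nu \<alpha>\<close> and \<open>T = T_of \<alpha>\<close>, so that \<open>exp (\<nu> T) = T / \<alpha>\<close>. The two
  inequalities defining \<open>T\<close> say exactly that \<open>exp \<nu> \<ge> 1 + 1/T\<close> and \<open>exp (-\<nu>) \<ge> 1 - 1/T\<close>,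
  so Bernoulli's inequality gives \<open>exp (\<nu> j) \<ge> 1 + j/T\<close> for every integer \<open>j\<close>; multiplied by
  \<open>exp (\<nu> T) = T / \<alpha>\<close> this becomes \<open>exp (\<nu> k) \<ge> k / \<alpha>\<close> for every integer \<open>k\<close>. Taking
  \<open>k = t - m\<close>, the first inequality is immediate, and the second follows from \<open>x \<le> m\<close> and
  \<open>exp (-\<nu> \<Delta>) \<ge> 1 - \<nu> \<Delta> \<ge> \<delta>\<close>.\<close>

definition T_threshold :: "nat \<Rightarrow> real" where
  "T_threshold T = real T ^ (T + 1) / (real T + 1) ^ T"

lemma T_threshold_le_Suc: "T_threshold T \<le> T_threshold (Suc T)"
proof -
  have "(real T * (real T + 2)) ^ (T + 1) \<le> ((real T + 1)\<^sup>2) ^ (T + 1)"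
    by (rule power_mono) (auto simp: power2_eq_square algebra_simps)
  also have "((real T + 1)\<^sup>2) ^ (T + 1) = (real T + 1) ^ T * (real T + 1) ^ (T + 2)"
    by (simp flip: power_mult power_add add: mult_2)
  finally have "real T ^ (T + 1) * (real T + 2) ^ (T + 1) \<le> (real T + 1) ^ T * (real T + 1) ^ (T + 2)"
    by (simp only: power_mult_distrib)
  then show ?thesis
    unfolding T_threshold_def by (simp add: divide_simps add_ac) (simp add: algebra_simps)
qed

lemma T_threshold_mono: "S \<le> T \<Longrightarrow> T_threshold S \<le> T_threshold T"
  by (rule lift_Suc_mono_le[of T_threshold, OF T_threshold_le_Suc])

lemma T_threshold_ge: "real T / exp 1 \<le> T_threshold T"
proof (cases "T = 0")
  case True
  then show ?thesis by (simp add: T_threshold_def)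
next
  case False
  then have T: "real T > 0" by simp
  have "(1 + 1 / real T) ^ T \<le> exp (1 / real T) ^ T"
    by (intro power_mono exp_ge_add_one_self) simp
  also have "\<dots> = exp 1"
    using T by (simp flip: exp_of_nat_mult)
  finally have "(1 + 1 / real T) ^ T \<le> exp 1" .
  then have "(real T + 1) ^ T \<le> exp 1 * real T ^ T"
    using T by (simp add: field_simps power_divide)
  then show ?thesis
    using T unfolding T_threshold_def by (simp add: field_simps)
qed

lemma T_threshold_pred:
  "T \<ge> 1 \<Longrightarrow> (real T - 1) ^ T / real T ^ (T - 1) = T_threshold (T - 1)"
  by (cases T) (auto simp: T_threshold_def add.commute)

lemma T_of_bounds:
  assumes "\<alpha> > 0"
  shows "1 \<le> T_of \<alpha>" and "T_threshold (T_of \<alpha> - 1) < \<alpha>" and "\<alpha> \<le> T_threshold (T_of \<alpha>)"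
proof -
  define P where "P T \<longleftrightarrow> 1 \<le> T \<and> T_threshold (T - 1) < \<alpha> \<and> \<alpha> \<le> T_threshold T" for T
  have T_of_eq: "T_of \<alpha> = (THE T. P T)"
    unfolding T_of_def P_def T_threshold_def[symmetric]
    by (intro arg_cong[of _ _ The] ext) (metis T_threshold_pred)
  obtain N :: nat where "\<alpha> < real N / exp 1"
    using reals_Archimedean2[of "\<alpha> * exp 1"] by (auto simp: field_simps)
  then have "\<alpha> \<le> T_threshold N"
    using T_threshold_ge[of N] by linarith
  define T where "T = (LEAST T. \<alpha> \<le> T_threshold T)"
  have upper: "\<alpha> \<le> T_threshold T"
    unfolding T_def by (rule LeastI) fact
  then have "T \<noteq> 0"
    using assms by (intro notI) (simp add: T_threshold_def)
  then have "\<not> \<alpha> \<le> T_threshold (T - 1)"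
    unfolding T_def by (intro not_less_Least) (simp add: T_def)
  with upper \<open>T \<noteq> 0\<close> have "P T"
    by (simp add: P_def)
  moreover have "S = T" if "P S" for S
  proof (rule linorder_cases[of S T])
    assume "S < T"
    then have "T_threshold S \<le> T_threshold (T - 1)"
      by (intro T_threshold_mono) simp
    then show ?thesis
      using that \<open>\<not> \<alpha> \<le> T_threshold (T - 1)\<close> by (simp add: P_def)
  next
    assume "T < S"
    then have "T_threshold T \<le> T_threshold (S - 1)"
      by (intro T_threshold_mono) simp
    then show ?thesis
      using that upper by (simp add: P_def)
  qed
  ultimately have "T_of \<alpha> = T"
    unfolding T_of_eq by (rule the_equality)
  with \<open>P T\<close> show "1 \<le> T_of \<alpha>" "T_threshold (T_of \<alpha> - 1) < \<alpha>" "\<alpha> \<le> T_threshold (T_of \<alpha>)"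
    by (simp_all add: P_def)
qed

lemma exp_nu_mult_T_of:
  assumes "\<alpha> > 0"
  shows "exp (nu \<alpha> * real (T_of \<alpha>)) = real (T_of \<alpha>) / \<alpha>"
  using assms T_of_bounds(1)[OF assms] by (simp add: nu_def)

lemma exp_nu_ge:
  assumes "\<alpha> > 0"
  shows "1 + 1 / real (T_of \<alpha>) \<le> exp (nu \<alpha>)"
proof -
  define T where "T = T_of \<alpha>"
  have T: "real T > 0"
    using T_of_bounds(1)[OF assms] by (simp add: T_def)
  have "\<alpha> * (real T + 1) ^ T \<le> real T ^ (T + 1)"
    using T_of_bounds(3)[OF assms] by (simp add: T_def T_threshold_def field_simps)
  then have "(1 + 1 / real T) ^ T \<le> real T / \<alpha>"
    using assms T by (simp add: field_simps power_divide)
  also have "\<dots> = exp (nu \<alpha>) ^ T"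
    using exp_nu_mult_T_of[OF assms] by (simp add: T_def mult.commute flip: exp_of_nat_mult)
  finally have "(1 + 1 / real T) ^ Suc (T - 1) \<le> exp (nu \<alpha>) ^ Suc (T - 1)"
    using T by simp
  from power_le_imp_le_base[OF this] show ?thesis
    by (simp add: T_def)
qed

lemma exp_neg_nu_ge:
  assumes "\<alpha> > 0"
  shows "1 - 1 / real (T_of \<alpha>) \<le> exp (- nu \<alpha>)"
proof -
  define T where "T = T_of \<alpha>"
  have T: "T \<ge> 1"
    using T_of_bounds(1)[OF assms] by (simp add: T_def)
  obtain n where n: "T = Suc n"
    using T by (cases T) auto
  have "(real T - 1) ^ T / real T ^ n < \<alpha>"
    using T_of_bounds(2)[OF assms, folded T_def] T_threshold_pred[OF T] by (simp add: n)
  then have lower: "(real T - 1) ^ T < \<alpha> * real T ^ n"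
    by (simp add: field_simps n)
  have "(1 - 1 / real T) ^ T = (real T - 1) ^ T / real T ^ T"
    using T by (simp add: field_simps power_divide)
  also have "\<dots> < \<alpha> * real T ^ n / real T ^ T"
    using T lower by (intro divide_strict_right_mono) auto
  also have "\<dots> = \<alpha> / real T"
    using T by (simp add: n)
  also have "\<dots> = inverse (exp (nu \<alpha> * real T))"
    using exp_nu_mult_T_of[OF assms] by (simp add: T_def)
  also have "\<dots> = exp (- nu \<alpha>) ^ T"
    by (metis exp_minus exp_of_nat_mult mult.commute mult_minus_right)
  finally have "1 - 1 / real T < exp (- nu \<alpha>)"
    by (rule power_less_imp_less_base) simp
  then show ?thesis
    by (simp add: T_def)
qed

lemma nu_pos:
  assumes "\<alpha> > 0"
  shows "nu \<alpha> > 0"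
proof -
  have "1 < 1 + 1 / real (T_of \<alpha>)"
    using T_of_bounds(1)[OF assms] by simp
  also have "\<dots> \<le> exp (nu \<alpha>)"
    using exp_nu_ge[OF assms] .
  finally show ?thesis
    by simp
qed

lemma exp_nat_mult_ge:
  fixes a c :: real
  assumes "-1 \<le> c" and "1 + c \<le> exp a"
  shows "1 + real n * c \<le> exp (a * real n)"
proof -
  have "1 + real n * c \<le> (1 + c) ^ n"
    using Bernoulli_inequality[OF assms(1)] .
  also have "\<dots> \<le> exp a ^ n"
    using assms by (intro power_mono) auto
  finally show ?thesis
    by (simp add: mult.commute flip: exp_of_nat_mult)
qed

lemma exp_int_mult_ge:
  fixes a c :: real and j :: int
  assumes "\<bar>c\<bar> \<le> 1" and "1 + c \<le> exp a" and "1 - c \<le> exp (- a)"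
  shows "1 + real_of_int j * c \<le> exp (a * real_of_int j)"
proof (cases "j \<ge> 0")
  case True
  then show ?thesis
    using exp_nat_mult_ge[of c a "nat j"] assms by simp
next
  case False
  then show ?thesis
    using exp_nat_mult_ge[of "- c" "- a" "nat (- j)"] assms by simp
qed

lemma exp_nu_int_mult_ge:
  assumes "\<alpha> > 0"
  shows "1 + real_of_int j / real (T_of \<alpha>) \<le> exp (nu \<alpha> * real_of_int j)"
proof -
  have "\<bar>1 / real (T_of \<alpha>)\<bar> \<le> 1"
    using T_of_bounds(1)[OF assms] by simp
  from exp_int_mult_ge[OF this exp_nu_ge[OF assms] exp_neg_nu_ge[OF assms]] show ?thesis
    by simp
qed

lemma exp_nu_int_mult_ge_div:
  assumes "\<alpha> > 0"
  shows "real_of_int k / \<alpha> \<le> exp (nu \<alpha> * real_of_int k)"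
proof -
  define T where "T = T_of \<alpha>"
  have T: "real T > 0"
    using T_of_bounds(1)[OF assms] by (simp add: T_def)
  have "real_of_int k / \<alpha> = real T / \<alpha> * (1 + real_of_int (k - int T) / real T)"
    using T by (simp add: field_simps)
  also have "\<dots> \<le> real T / \<alpha> * exp (nu \<alpha> * real_of_int (k - int T))"
    using exp_nu_int_mult_ge[OF assms, of "k - int T", folded T_def] assms T
    by (intro mult_left_mono) simp_all
  also have "\<dots> = exp (nu \<alpha> * real T) * exp (nu \<alpha> * real_of_int (k - int T))"
    using exp_nu_mult_T_of[OF assms, folded T_def] by simp
  also have "\<dots> = exp (nu \<alpha> * real_of_int k)"
    by (simp flip: exp_add add: algebra_simps)
  finally show ?thesis .
qed

lemma exp_nu_add_le_exp_nu:
  fixes m t :: int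
  assumes "\<alpha> > 0"
  shows "exp (nu \<alpha> * m) + (real_of_int (t - m) / \<alpha>) * exp (nu \<alpha> * (m - real (T_of \<alpha>)))
           \<le> exp (nu \<alpha> * t)"
proof -
  define T where "T = T_of \<alpha>"
  have T: "real T > 0"
    using T_of_bounds(1)[OF assms] by (simp add: T_def)
  have "exp (nu \<alpha> * (m - real T)) = exp (nu \<alpha> * m) * (\<alpha> / real T)"
    using exp_nu_mult_T_of[OF assms, folded T_def] by (simp add: right_diff_distrib exp_diff)
  then have "exp (nu \<alpha> * m) + (real_of_int (t - m) / \<alpha>) * exp (nu \<alpha> * (m - real T))
      = exp (nu \<alpha> * m) * (1 + real_of_int (t - m) / real T)"
    using assms T by (simp add: field_simps)
  also have "\<dots> \<le> exp (nu \<alpha> * m) * exp (nu \<alpha> * real_of_int (t - m))"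
    using exp_nu_int_mult_ge[OF assms, of "t - m", folded T_def] by simp
  also have "\<dots> = exp (nu \<alpha> * t)"
    by (simp flip: exp_add add: algebra_simps)
  finally show ?thesis
    by (simp add: T_def)
qed

lemma exp_nu_diff_add_le_exp_nu:
  fixes \<delta> \<Delta> x :: real and m t :: int
  assumes "\<alpha> > 0" and "0 \<le> \<delta>" and "\<delta> \<le> 1" and "\<Delta> \<le> (1 - \<delta>) / nu \<alpha>"
    and "x \<le> m" and "m \<le> t"
  shows "exp (nu \<alpha> * m) - exp (nu \<alpha> * (x - \<Delta>)) + \<delta> * (real_of_int (t - m) / \<alpha>) * exp (nu \<alpha> * x)
           \<le> exp (nu \<alpha> * t)"
proof -
  define \<nu> where "\<nu> = nu \<alpha>"
  define M where "M = exp (\<nu> * m)"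
  define X where "X = exp (\<nu> * x)"
  define K where "K = exp (\<nu> * real_of_int (t - m))"
  define k where "k = real_of_int (t - m) / \<alpha>"
  have \<nu>: "\<nu> > 0"
    using nu_pos[OF assms(1)] by (simp add: \<nu>_def)
  have "\<nu> * \<Delta> \<le> 1 - \<delta>"
    using assms(4) \<nu> by (simp add: \<nu>_def field_simps)
  then have damping: "\<delta> \<le> exp (- (\<nu> * \<Delta>))"
    using exp_ge_add_one_self[of "- (\<nu> * \<Delta>)"] by linarith
  have "1 \<le> K"
    using \<nu> assms(6) by (simp add: K_def zero_le_mult_iff)
  moreover have "k \<le> K"
    using exp_nu_int_mult_ge_div[OF assms(1), of "t - m"] by (simp add: K_def k_def \<nu>_def)
  ultimately have growth: "\<delta> * (k - 1) \<le> K - 1"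
  proof (cases "k \<le> 1")
    case True
    then have "\<delta> * (k - 1) \<le> 0"
      using assms(2) by (simp add: mult_nonneg_nonpos)
    with \<open>1 \<le> K\<close> show ?thesis
      by linarith
  next
    case False
    then have "\<delta> * (k - 1) \<le> k - 1"
      using assms(2,3) by (simp add: mult_left_le_one_le)
    with \<open>k \<le> K\<close> show ?thesis
      by linarith
  qed
  have "X \<le> M"
    using \<nu> assms(5) by (simp add: X_def M_def)
  have "M - X * exp (- (\<nu> * \<Delta>)) + \<delta> * k * X \<le> M + X * (\<delta> * (k - 1))"
    using damping by (simp add: X_def algebra_simps)
  also have "\<dots> \<le> M + X * (K - 1)"
    using growth by (intro add_left_mono mult_left_mono) (simp_all add: X_def)
  also have "\<dots> \<le> M + M * (K - 1)"
    using \<open>X \<le> M\<close> \<open>1 \<le> K\<close> by (intro add_left_mono mult_right_mono) simp_all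
  also have "\<dots> = exp (\<nu> * t)"
    by (simp add: M_def K_def algebra_simps flip: exp_add)
  finally show ?thesis
    by (simp add: \<nu>_def M_def X_def k_def algebra_simps flip: exp_add)
qed

theorem lemma11:
  fixes \<alpha>' \<delta> \<Delta> x :: real and t m :: int
  assumes "\<alpha>' > 0"
    and "0 < \<delta>" and "\<delta> < 1"
    and "0 < \<Delta>" and "\<Delta> \<le> (1 - \<delta>) / nu \<alpha>'"
    and "real (T_of \<alpha>') \<le> x" and "x \<le> real_of_int m" and "m < t"
  shows "(exp (nu \<alpha>' * m) + (real_of_int (t - m) / \<alpha>') * exp (nu \<alpha>' * (m - real (T_of \<alpha>')))
           \<le> exp (nu \<alpha>' * t)) \<and>
         (exp (nu \<alpha>' * m) - exp (nu \<alpha>' * (x - \<Delta>)) + \<delta> * (real_of_int (t - m) / \<alpha>') * exp (nu \<alpha>' * x)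
           \<le> exp (nu \<alpha>' * t))"
  using exp_nu_add_le_exp_nu[OF assms(1)]
    exp_nu_diff_add_le_exp_nu[of \<alpha>' \<delta> \<Delta> x m t] assms(1-3,5,7,8) by simp

end
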